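(* Let $G$ be a finite group, $\mathbb{K}$ a field, and $\mathcal{H}=(\mathbb{K}G)^*$. Then $\mathcal{H}$ has enough cocommutative elements, i.e. $\mathcal{R}_{\mathcal{H}}^+\mathcal{H}=\mathcal{H}^+$, and $\mathcal{R}_{\mathcal{H}}$ is a semisimple algebra.
   Context: $(\mathbb{K}G)^*$ is the dual Hopf algebra of the group algebra: with $\{p_x\}_{x\in G}$ the dual basis of $G$, $p_xp_y=\delta_{x,y}p_x$, $\Delta(p_x)=\sum_{g\in G}p_{xg^{-1}}\otimes p_g$, $\varepsilon(p_x)=\delta_{x,1}$. For a Hopf algebra $\mathcal{H}$: $\mathcal{H}^+=\ker\varepsilon$, $\mathcal{R}_{\mathcal{H}}=\{r:\sum r_{(1)}\otimes r_{(2)}=\sum r_{(2)}\otimes r_{(1)}\}$, $\mathcal{R}_{\mathcal{H}}^+=\mathcal{R}_{\mathcal{H}}\cap\mathcal{H}^+$. *)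

theory Defs
  imports "HOL-Algebra.Group" "HOL-Library.Function_Algebras"
begin

text \<open>The dual Hopf algebra (KG)^* of the group algebra of a finite group G over a
field K, modelled as the K-valued functions on carrier G (extended by 0 outside
the carrier). Multiplication is pointwise (so p_x p_y = delta_{x,y} p_x).
H tensor H is modelled as the K-valued functions on carrier G x carrier G,
with (f tensor h)(u,v) = f u * h v.\<close>

definition dual_H :: "('g, 'b) monoid_scheme \<Rightarrow> ('g \<Rightarrow> 'k::field) set" where
  "dual_H G = {f. \<forall>y. y \<notin> carrier G \<longrightarrow> f y = 0}"

definition pb :: "'g \<Rightarrow> 'g \<Rightarrow> 'k::field" where
  "pb x = (\<lambda>y. if y = x then 1 else 0)"

definition tens :: "('g \<Rightarrow> 'k::field) \<Rightarrow> ('g \<Rightarrow> 'k) \<Rightarrow> ('g \<times> 'g \<Rightarrow> 'k)" where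
  "tens f h = (\<lambda>(u, v). f u * h v)"

definition smul :: "'k::field \<Rightarrow> ('a \<Rightarrow> 'k) \<Rightarrow> ('a \<Rightarrow> 'k)" where
  "smul c f = (\<lambda>z. c * f z)"

definition pmul :: "('a \<Rightarrow> 'k::field) \<Rightarrow> ('a \<Rightarrow> 'k) \<Rightarrow> ('a \<Rightarrow> 'k)" where
  "pmul f h = (\<lambda>z. f z * h z)"

definition unit_H :: "('g, 'b) monoid_scheme \<Rightarrow> 'g \<Rightarrow> 'k::field" where
  "unit_H G = (\<lambda>y. if y \<in> carrier G then 1 else 0)"

definition comult :: "('g, 'b) monoid_scheme \<Rightarrow> ('g \<Rightarrow> 'k::field) \<Rightarrow> ('g \<times> 'g \<Rightarrow> 'k)" where
  "comult G f = (\<Sum>x\<in>carrier G. smul (f x)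
      (\<Sum>g\<in>carrier G. tens (pb (x \<otimes>\<^bsub>G\<^esub> inv\<^bsub>G\<^esub> g)) (pb g)))"

text \<open>Counit: epsilon(p_x) = delta_{x,1}, i.e. epsilon(f) = f 1.\<close>
definition counit :: "('g, 'b) monoid_scheme \<Rightarrow> ('g \<Rightarrow> 'k::field) \<Rightarrow> 'k" where
  "counit G f = f \<one>\<^bsub>G\<^esub>"

definition flip_T :: "('g \<times> 'g \<Rightarrow> 'k) \<Rightarrow> ('g \<times> 'g \<Rightarrow> 'k)" where
  "flip_T T = (\<lambda>(u, v). T (v, u))"

definition H_plus :: "('g, 'b) monoid_scheme \<Rightarrow> ('g \<Rightarrow> 'k::field) set" where
  "H_plus G = {f \<in> dual_H G. counit G f = 0}"

definition R_H :: "('g, 'b) monoid_scheme \<Rightarrow> ('g \<Rightarrow> 'k::field) set" where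
  "R_H G = {r \<in> dual_H G. flip_T (comult G r) = comult G r}"

definition R_H_plus :: "('g, 'b) monoid_scheme \<Rightarrow> ('g \<Rightarrow> 'k::field) set" where
  "R_H_plus G = R_H G \<inter> H_plus G"

definition prod_sub :: "('a \<Rightarrow> 'k::field) set \<Rightarrow> ('a \<Rightarrow> 'k) set \<Rightarrow> ('a \<Rightarrow> 'k) set" where
  "prod_sub A B = {(\<Sum>i<n. pmul (a i) (b i)) | (n::nat) a b. (\<forall>i<n. a i \<in> A \<and> b i \<in> B)}"

definition subalgebra_H :: "('g, 'b) monoid_scheme \<Rightarrow> ('g \<Rightarrow> 'k::field) set \<Rightarrow> bool" where
  "subalgebra_H G A \<longleftrightarrow> A \<subseteq> dual_H G \<and> unit_H G \<in> A \<and> 0 \<in> A \<and>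
     (\<forall>x\<in>A. \<forall>y\<in>A. x + y \<in> A \<and> pmul x y \<in> A) \<and> (\<forall>c. \<forall>x\<in>A. smul c x \<in> A)"

definition left_ideal :: "('a \<Rightarrow> 'k::field) set \<Rightarrow> ('a \<Rightarrow> 'k) set \<Rightarrow> bool" where
  "left_ideal A I \<longleftrightarrow> I \<subseteq> A \<and> 0 \<in> I \<and> (\<forall>x\<in>I. \<forall>y\<in>I. x + y \<in> I) \<and>
     (\<forall>c. \<forall>x\<in>I. smul c x \<in> I) \<and> (\<forall>a\<in>A. \<forall>x\<in>I. pmul a x \<in> I)"

text \<open>Semisimple algebra: the regular left module is semisimple, i.e. every left
ideal is a direct summand (has a complementary left ideal).\<close>
definition semisimple_subalgebra :: "('g, 'b) monoid_scheme \<Rightarrow> ('g \<Rightarrow> 'k::field) set \<Rightarrow> bool" where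
  "semisimple_subalgebra G A \<longleftrightarrow> subalgebra_H G A \<and>
     (\<forall>I. left_ideal A I \<longrightarrow> (\<exists>J. left_ideal A J \<and> I \<inter> J = {0} \<and>
        {x + y | x y. x \<in> I \<and> y \<in> J} = A))"

end

theory Submission
  imports Defs
begin

text \<open>Under the identification of \<open>\<H> \<otimes> \<H>\<close> with functions on \<open>G \<times> G\<close>, the coproduct is
  \<open>\<Delta>(f)(u, v) = f(u v)\<close>, so the cocommutative elements are exactly the class functions.
  The class function vanishing only at \<open>1\<close> lies in \<open>\<R>\<^sup>+\<close> and acts as the identity on \<open>\<H>\<^sup>+\<close>,
  which gives \<open>\<R>\<^sup>+\<H> = \<H>\<^sup>+\<close>. The class functions form an algebra of functions on a finite set
  closed under pointwise inversion; in such an algebra every left ideal contains the indicator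
  function of its joint support, which is a unit for the ideal, and the functions vanishing on
  that support form a complementary ideal.\<close>

lemma sum_fun_apply: "(\<Sum>i\<in>A. F i) y = (\<Sum>i\<in>A. F i y)"
  by (induction A rule: infinite_finite_induct) auto

lemma diff_mem_if_add_smul_closed:
  assumes add: "\<And>x y. x \<in> S \<Longrightarrow> y \<in> S \<Longrightarrow> x + y \<in> S"
    and smul: "\<And>c x. x \<in> S \<Longrightarrow> smul c x \<in> S"
    and "x \<in> S" and "y \<in> S"
  shows "x - y \<in> (S :: ('a \<Rightarrow> 'k::field) set)"
proof -
  have "x - y = x + smul (- 1) y" by (simp add: smul_def fun_eq_iff)
  then show ?thesis using assms by metis
qed

lemma left_ideal_diff:
  assumes "left_ideal A I" and "x \<in> I" and "y \<in> I"
  shows "x - y \<in> I"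
  using assms unfolding left_ideal_def by (intro diff_mem_if_add_smul_closed) auto

lemma left_ideal_complement_if_right_unit:
  fixes A I :: "('a \<Rightarrow> 'k::field) set"
  assumes I: "left_ideal A I"
    and A_add: "\<And>x y. x \<in> A \<Longrightarrow> y \<in> A \<Longrightarrow> x + y \<in> A"
    and A_smul: "\<And>c x. x \<in> A \<Longrightarrow> smul c x \<in> A"
    and A_mul: "\<And>x y. x \<in> A \<Longrightarrow> y \<in> A \<Longrightarrow> pmul x y \<in> A"
    and e: "e \<in> I" and unit_e: "\<And>f. f \<in> I \<Longrightarrow> pmul f e = f"
  shows "\<exists>J. left_ideal A J \<and> I \<inter> J = {0} \<and> {x + y | x y. x \<in> I \<and> y \<in> J} = A"
proof -
  have IA: "I \<subseteq> A" and I0: "0 \<in> I" and I_mul: "\<And>a x. a \<in> A \<Longrightarrow> x \<in> I \<Longrightarrow> pmul a x \<in> I"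
    using I unfolding left_ideal_def by blast+
  have eA: "e \<in> A" using e IA by blast
  have idem: "\<And>z. e z * e z = e z"
    using unit_e[OF e] by (simp add: pmul_def fun_eq_iff)
  define J where "J = {x \<in> A. pmul x e = 0}"
  have "left_ideal A J"
    using A_add A_smul A_mul I0 IA
    by (auto simp: left_ideal_def J_def pmul_def smul_def fun_eq_iff distrib_right mult.assoc
        simp del: mult_eq_0_iff)
  moreover have "I \<inter> J = {0}"
  proof -
    have "f = 0" if "f \<in> I" "f \<in> J" for f
      using unit_e[OF that(1)] that(2) by (simp add: J_def)
    then show ?thesis using I0 IA by (auto simp: J_def pmul_def)
  qed
  moreover have "{x + y | x y. x \<in> I \<and> y \<in> J} = A"
  proof (intro equalityI subsetI)
    fix a assume a: "a \<in> A"
    have "pmul (a - pmul a e) e = 0"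
      by (simp add: pmul_def fun_eq_iff left_diff_distrib mult.assoc idem)
    then have "a - pmul a e \<in> J"
      using a eA by (simp add: J_def diff_mem_if_add_smul_closed A_add A_smul A_mul)
    moreover have "a = pmul a e + (a - pmul a e)" by simp
    ultimately show "a \<in> {x + y | x y. x \<in> I \<and> y \<in> J}"
      using I_mul[OF a e] by blast
  next
    fix a assume "a \<in> {x + y | x y. x \<in> I \<and> y \<in> J}"
    then obtain x y where "a = x + y" "x \<in> I" "y \<in> J" by blast
    then show "a \<in> A"
      using IA A_add by (auto simp: J_def)
  qed
  ultimately show ?thesis by blast
qed

lemma left_ideal_has_right_unit:
  fixes A I :: "('a \<Rightarrow> 'k::field) set"
  assumes I: "left_ideal A I"
    and U: "finite U" and vanish: "\<And>f z. f \<in> A \<Longrightarrow> z \<notin> U \<Longrightarrow> f z = 0"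
    and A_inverse: "\<And>f. f \<in> A \<Longrightarrow> (\<lambda>z. inverse (f z)) \<in> A"
  shows "\<exists>e\<in>I. \<forall>f\<in>I. pmul f e = f"
proof -
  have IA: "I \<subseteq> A" and I0: "0 \<in> I" and I_add: "\<And>x y. x \<in> I \<Longrightarrow> y \<in> I \<Longrightarrow> x + y \<in> I"
    and I_mul: "\<And>a x. a \<in> A \<Longrightarrow> x \<in> I \<Longrightarrow> pmul a x \<in> I"
    using I unfolding left_ideal_def by blast+
  txt \<open>An idempotent \<open>e \<in> I\<close> equal to \<open>1\<close> on the support of \<open>I\<close> within \<open>T\<close>; it is grown one point
    at a time by joining it with the support indicator \<open>f\<^sup>-\<^sup>1 f\<close> of some \<open>f \<in> I\<close>.\<close>
  have "\<exists>e\<in>I. (\<forall>z. e z * e z = e z) \<and> (\<forall>f\<in>I. \<forall>z\<in>T. f z \<noteq> 0 \<longrightarrow> e z = 1)"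
    if "finite T" for T
    using that
  proof (induction T rule: finite_induct)
    case empty
    show ?case using I0 by (intro bexI[of _ 0]) auto
  next
    case (insert y T)
    then obtain e where e: "e \<in> I" and idem: "\<forall>z. e z * e z = e z"
      and one: "\<forall>f\<in>I. \<forall>z\<in>T. f z \<noteq> 0 \<longrightarrow> e z = 1" by blast
    show ?case
    proof (cases "\<exists>f\<in>I. f y \<noteq> 0")
      case False
      then show ?thesis using e idem one by blast
    next
      case True
      then obtain f where f: "f \<in> I" and fy: "f y \<noteq> 0" by blast
      define d where "d = pmul (\<lambda>z. inverse (f z)) f"
      have d: "d \<in> I" unfolding d_def using f IA by (intro I_mul A_inverse) auto
      have d_val: "d z = (if f z = 0 then 0 else 1)" for z by (simp add: d_def pmul_def)
      have "e + (d - pmul e d) \<in> I"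
        using e d IA by (intro I_add left_ideal_diff[OF I] I_mul) auto
      moreover have "\<forall>z. (e + (d - pmul e d)) z * (e + (d - pmul e d)) z = (e + (d - pmul e d)) z"
      proof
        fix z
        have "e z = 0 \<or> e z = 1" using idem by (metis mult_cancel_right1 mult_zero_right)
        then show "(e + (d - pmul e d)) z * (e + (d - pmul e d)) z = (e + (d - pmul e d)) z"
          by (auto simp: pmul_def d_val)
      qed
      moreover have "\<forall>g\<in>I. \<forall>z\<in>insert y T. g z \<noteq> 0 \<longrightarrow> (e + (d - pmul e d)) z = 1"
        using one fy by (auto simp: pmul_def d_val)
      ultimately show ?thesis by blast
    qed
  qed
  then obtain e where e: "e \<in> I" and one: "\<forall>f\<in>I. \<forall>z\<in>U. f z \<noteq> 0 \<longrightarrow> e z = 1"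
    using U by blast
  have "pmul f e = f" if "f \<in> I" for f
    using that one vanish IA by (force simp: pmul_def fun_eq_iff)
  then show ?thesis using e by blast
qed

lemma semisimple_subalgebra_if_inverse_closed:
  fixes A :: "('g \<Rightarrow> 'k::field) set"
  assumes "finite (carrier G)" and A: "subalgebra_H G A"
    and A_inverse: "\<And>f. f \<in> A \<Longrightarrow> (\<lambda>z. inverse (f z)) \<in> A"
  shows "semisimple_subalgebra G A"
  unfolding semisimple_subalgebra_def
proof (intro conjI allI impI A)
  fix I assume I: "left_ideal A I"
  have vanish: "f z = 0" if "f \<in> A" "z \<notin> carrier G" for f z
    using A that unfolding subalgebra_H_def dual_H_def by blast
  obtain e where "e \<in> I" "\<forall>f\<in>I. pmul f e = f"
    using left_ideal_has_right_unit[OF I assms(1)] vanish A_inverse by blast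
  then show "\<exists>J. left_ideal A J \<and> I \<inter> J = {0} \<and> {x + y | x y. x \<in> I \<and> y \<in> J} = A"
    using A by (intro left_ideal_complement_if_right_unit[OF I]) (auto simp: subalgebra_H_def)
qed

lemma comult_apply:
  fixes G :: "('g, 'b) monoid_scheme" (structure) and f :: "'g \<Rightarrow> 'k::field"
  assumes "group G" and fin: "finite (carrier G)"
  shows "comult G f (u, v) = (if u \<in> carrier G \<and> v \<in> carrier G then f (u \<otimes> v) else 0)"
proof -
  interpret group G by fact
  have inner: "(\<Sum>g\<in>carrier G. pb (x \<otimes> inv g) u * pb g v) =
      (if v \<in> carrier G \<and> u \<in> carrier G \<and> x = u \<otimes> v then 1 else (0 :: 'k))"
    if x: "x \<in> carrier G" for x
  proof -
    have "(\<Sum>g\<in>carrier G. pb (x \<otimes> inv g) u * pb g v) =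
        (\<Sum>g\<in>carrier G. if g = v then pb (x \<otimes> inv v) u else (0 :: 'k))"
      by (rule sum.cong) (auto simp: pb_def)
    also have "\<dots> = (if v \<in> carrier G then pb (x \<otimes> inv v) u else 0)"
      by (simp add: fin sum.delta')
    also have "\<dots> = (if v \<in> carrier G \<and> u \<in> carrier G \<and> x = u \<otimes> v then 1 else 0)"
      using x by (auto simp: pb_def m_assoc)
    finally show ?thesis .
  qed
  have "comult G f (u, v) = (\<Sum>x\<in>carrier G. f x * (\<Sum>g\<in>carrier G. pb (x \<otimes> inv g) u * pb g v))"
    by (simp add: comult_def sum_fun_apply smul_def tens_def)
  also have "\<dots> = (\<Sum>x\<in>carrier G. if u \<in> carrier G \<and> v \<in> carrier G \<and> x = u \<otimes> v then f x else 0)"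
    by (rule sum.cong) (auto simp: inner)
  also have "\<dots> = (if u \<in> carrier G \<and> v \<in> carrier G then f (u \<otimes> v) else 0)"
    by (auto simp: fin sum.delta' cong: if_cong)
  finally show ?thesis .
qed

lemma R_H_eq_class_functions:
  fixes G (structure)
  assumes "group G" and "finite (carrier G)"
  shows "R_H G = {f \<in> dual_H G. \<forall>u\<in>carrier G. \<forall>v\<in>carrier G. f (u \<otimes> v) = f (v \<otimes> u)}"
proof -
  interpret group G by fact
  have "flip_T (comult G f) = comult G f \<longleftrightarrow>
      (\<forall>u\<in>carrier G. \<forall>v\<in>carrier G. f (u \<otimes> v) = f (v \<otimes> u))" for f :: "_ \<Rightarrow> 'k::field"
    by (auto simp: flip_T_def fun_eq_iff comult_apply[OF assms] m_closed)
  then show ?thesis by (auto simp: R_H_def)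
qed

lemma subalgebra_H_R_H:
  assumes "group G" and "finite (carrier G)"
  shows "subalgebra_H G (R_H G)"
proof -
  interpret group G by fact
  show ?thesis
    by (auto simp: subalgebra_H_def R_H_eq_class_functions[OF assms] dual_H_def unit_H_def
        pmul_def smul_def)
qed

lemma R_H_inverse_closed:
  assumes "group G" and "finite (carrier G)" and "f \<in> R_H G"
  shows "(\<lambda>z. inverse (f z)) \<in> R_H G"
  using assms(3) by (auto simp: R_H_eq_class_functions[OF assms(1,2)] dual_H_def)

lemma pmul_mem_prod_sub:
  assumes "a \<in> A" and "b \<in> B"
  shows "pmul a b \<in> prod_sub A B"
  unfolding prod_sub_def
  by (rule CollectI, rule exI[of _ 1], rule exI[of _ "\<lambda>_. a"], rule exI[of _ "\<lambda>_. b"])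
     (use assms in auto)

lemma prod_sub_dual_H_subset_H_plus:
  assumes "A \<subseteq> H_plus G"
  shows "prod_sub A (dual_H G) \<subseteq> H_plus G"
proof
  fix x assume "x \<in> prod_sub A (dual_H G)"
  then obtain n a b where x: "x = (\<Sum>i<(n::nat). pmul (a i) (b i))"
    and ab: "\<forall>i<n. a i \<in> A \<and> b i \<in> dual_H G"
    unfolding prod_sub_def by blast
  moreover have "a i \<one>\<^bsub>G\<^esub> = 0" if "i < n" for i
    using ab assms that by (auto simp: H_plus_def counit_def)
  ultimately show "x \<in> H_plus G"
    by (auto simp: H_plus_def counit_def dual_H_def sum_fun_apply pmul_def)
qed

lemma H_plus_subset_prod_sub_R_H_plus:
  assumes "group G" and "finite (carrier G)"
  shows "H_plus G \<subseteq> prod_sub (R_H_plus G) (dual_H G :: ('g \<Rightarrow> 'k::field) set)"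
proof
  interpret group G by fact
  define a :: "'g \<Rightarrow> 'k" where "a = (\<lambda>z. if z \<in> carrier G \<and> z \<noteq> \<one>\<^bsub>G\<^esub> then 1 else 0)"
  have "a \<in> R_H_plus G"
    by (auto simp: R_H_plus_def H_plus_def counit_def R_H_eq_class_functions[OF assms] a_def
        dual_H_def dest: inv_comm)
  fix f :: "'g \<Rightarrow> 'k" assume f: "f \<in> H_plus G"
  have "pmul a f = f"
    using f by (auto simp: H_plus_def counit_def dual_H_def pmul_def a_def fun_eq_iff)
  then show "f \<in> prod_sub (R_H_plus G) (dual_H G)"
    using pmul_mem_prod_sub[OF \<open>a \<in> R_H_plus G\<close>, of f] f by (simp add: H_plus_def)
qed

theorem lemma2p30:
  fixes G :: "('g, 'b) monoid_scheme"
  assumes "group G" and "finite (carrier G)"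
  shows "prod_sub (R_H_plus G) (dual_H G :: ('g \<Rightarrow> 'k::field) set) = H_plus G
         \<and> semisimple_subalgebra G (R_H G :: ('g \<Rightarrow> 'k) set)"
proof
  have "R_H_plus G \<subseteq> (H_plus G :: ('g \<Rightarrow> 'k) set)" by (simp add: R_H_plus_def)
  then show "prod_sub (R_H_plus G) (dual_H G) = (H_plus G :: ('g \<Rightarrow> 'k) set)"
    using prod_sub_dual_H_subset_H_plus H_plus_subset_prod_sub_R_H_plus[OF assms] by blast
  show "semisimple_subalgebra G (R_H G :: ('g \<Rightarrow> 'k) set)"
    using assms R_H_inverse_closed
    by (intro semisimple_subalgebra_if_inverse_closed subalgebra_H_R_H) auto
qed

end
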